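(* Let $X_1, X_2, \ldots, X_n$ be independent random variables, each uniformly distributed on $[-1,1]$, and fix $\varepsilon > 0$. For $0 \le t \le n$ and $z \in \mathbb{R}$, let $f_t(z) = 1$ if there exists $S \subseteq \{1,\dots,t\}$ with $\lvert z - \sum_{i \in S} X_i \rvert < \varepsilon$, and $f_t(z) = 0$ otherwise. Let $v_t = \frac{1}{2}\int_{-1}^{1} f_t(z)\,\mathrm{d}z$. Then for all $0 \le t < n$, $$\mathbb{E}\left[v_{t+1} \,\middle|\, X_1,\dots,X_t\right] \ge v_t\left[1 + \tfrac{1}{4}(1 - v_t)\right].$$
   Context: A value $z$ is called $\varepsilon$-approximated at time $t$ if some subset of the first $t$ variables sums to within distance strictly less than $\varepsilon$ of $z$; $f_t$ is the indicator of this event (so $f_0 = \mathbf{1}_{(-\varepsilon,\varepsilon)}$, the empty sum being $0$), and $v_t$ is the fraction of $[-1,1]$ that is $\varepsilon$-approximated at time $t$. *)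

theory Defs
  imports "HOL-Probability.Probability"
begin

definition approx_ind :: "real \<Rightarrow> (nat \<Rightarrow> real) \<Rightarrow> nat \<Rightarrow> real \<Rightarrow> real" where
  "approx_ind eps x t z =
     (if \<exists>S. S \<subseteq> {1..t} \<and> \<bar>z - (\<Sum>i\<in>S. x i)\<bar> < eps then 1 else 0)"

definition approx_frac :: "real \<Rightarrow> (nat \<Rightarrow> real) \<Rightarrow> nat \<Rightarrow> real" where
  "approx_frac eps x t = (1/2) * integral {-1..1} (approx_ind eps x t)"

definition gen_sigma :: "'a measure \<Rightarrow> (nat \<Rightarrow> 'a \<Rightarrow> real) \<Rightarrow> nat \<Rightarrow> 'a measure" where
  "gen_sigma M X t = sigma (space M)
     {X i -` A \<inter> space M | i A. i \<in> {1..t} \<and> A \<in> sets borel}"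

end

(*
  Conditionally on X_1, ..., X_t the approximated set A = {f_t = 1} is fixed, and
  f_(t+1)(z) = max (f_t z) (f_t (z - X_(t+1))) with X_(t+1) uniform on [-1,1] and independent
  of A.  By the freezing lemma, the conditional expectation of v_(t+1) is therefore v_t plus
  1/4 times the integral over y in [-1,1] of |B n (A + y)|, where B = [-1,1] - A.
  By Fubini this integral is the integral over z in B of |{y in [-1,1]. z - y in A}|, which is
  at least |A n [-1,1] n [z-1,z+1]| >= |A n [-1,1]| - |z|.  The bathtub principle bounds the
  integral of |z| over B by |B| - |B|^2/4, and since |A n [-1,1]| + |B| = 2 the result is at
  least |A n [-1,1]| |B| / 4 when |B| <= 1.  The case |B| > 1 follows from the same bound
  with the roles of A n [-1,1] and B exchanged, as the integral is symmetric in them.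
  This gives the gain v_t (1 - v_t) / 4.
*)

theory Submission
  imports Defs
begin

section \<open>Approximated points\<close>

lemma approx_ind_eq_0_or_1: "approx_ind eps x t z = 0 \<or> approx_ind eps x t z = 1"
  unfolding approx_ind_def by auto

lemma approx_ind_cong:
  assumes "\<And>i. i \<in> {1..t} \<Longrightarrow> x i = x' i"
  shows "approx_ind eps x t z = approx_ind eps x' t z"
proof -
  have "\<And>S. S \<subseteq> {1..t} \<Longrightarrow> (\<Sum>i\<in>S. x i) = (\<Sum>i\<in>S. x' i)"
    using assms by (intro sum.cong) auto
  then show ?thesis unfolding approx_ind_def by (metis (no_types, lifting))
qed

lemma approximable_Suc_iff:
  fixes x :: "nat \<Rightarrow> real"
  shows "(\<exists>S\<subseteq>{1..Suc t}. \<bar>z - (\<Sum>i\<in>S. x i)\<bar> < eps) \<longleftrightarrow>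
   (\<exists>S\<subseteq>{1..t}. \<bar>z - (\<Sum>i\<in>S. x i)\<bar> < eps) \<or>
   (\<exists>S\<subseteq>{1..t}. \<bar>(z - x (Suc t)) - (\<Sum>i\<in>S. x i)\<bar> < eps)"
proof
  assume "\<exists>S\<subseteq>{1..Suc t}. \<bar>z - (\<Sum>i\<in>S. x i)\<bar> < eps"
  then obtain S where S: "S \<subseteq> {1..Suc t}" "\<bar>z - (\<Sum>i\<in>S. x i)\<bar> < eps" by blast
  show "(\<exists>S\<subseteq>{1..t}. \<bar>z - (\<Sum>i\<in>S. x i)\<bar> < eps) \<or>
        (\<exists>S\<subseteq>{1..t}. \<bar>(z - x (Suc t)) - (\<Sum>i\<in>S. x i)\<bar> < eps)"
  proof (cases "Suc t \<in> S")
    case True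
    have sum_S: "(\<Sum>i\<in>S. x i) = x (Suc t) + (\<Sum>i\<in>S - {Suc t}. x i)"
      using True finite_subset[OF S(1)] by (simp add: sum.remove)
    have "S - {Suc t} \<subseteq> {1..t}" using S(1) by auto
    moreover have "\<bar>(z - x (Suc t)) - (\<Sum>i\<in>S - {Suc t}. x i)\<bar> < eps"
      using S(2) unfolding sum_S by (simp only: diff_diff_eq)
    ultimately show ?thesis by blast
  next
    case False
    then have "S \<subseteq> {1..t}" using S(1) by (auto simp: le_Suc_eq)
    then show ?thesis using S(2) by blast
  qed
next
  assume "(\<exists>S\<subseteq>{1..t}. \<bar>z - (\<Sum>i\<in>S. x i)\<bar> < eps) \<or>
          (\<exists>S\<subseteq>{1..t}. \<bar>(z - x (Suc t)) - (\<Sum>i\<in>S. x i)\<bar> < eps)"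
  then show "\<exists>S\<subseteq>{1..Suc t}. \<bar>z - (\<Sum>i\<in>S. x i)\<bar> < eps"
  proof
    assume "\<exists>S\<subseteq>{1..t}. \<bar>z - (\<Sum>i\<in>S. x i)\<bar> < eps"
    moreover have "{1..t} \<subseteq> {1..Suc t}" by auto
    ultimately show ?thesis by blast
  next
    assume "\<exists>S\<subseteq>{1..t}. \<bar>(z - x (Suc t)) - (\<Sum>i\<in>S. x i)\<bar> < eps"
    then obtain S where S: "S \<subseteq> {1..t}" "\<bar>(z - x (Suc t)) - (\<Sum>i\<in>S. x i)\<bar> < eps" by blast
    have "(\<Sum>i\<in>insert (Suc t) S. x i) = x (Suc t) + (\<Sum>i\<in>S. x i)"
    proof (rule sum.insert)
      show "finite S" using finite_subset[OF S(1)] by blast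
      show "Suc t \<notin> S" using S(1) by auto
    qed
    then have "\<bar>z - (\<Sum>i\<in>insert (Suc t) S. x i)\<bar> < eps"
      using S(2) by (simp only: diff_diff_eq)
    moreover have "insert (Suc t) S \<subseteq> {1..Suc t}" using S(1) by auto
    ultimately show ?thesis by blast
  qed
qed

lemma approx_ind_Suc:
  "approx_ind eps x (Suc t) z = max (approx_ind eps x t z) (approx_ind eps x t (z - x (Suc t)))"
proof -
  have "(if P \<or> Q then 1 else 0) = max (if P then 1 else 0) (if Q then 1 else (0::real))" for P Q
    by simp
  then show ?thesis unfolding approx_ind_def approximable_Suc_iff .
qed

lemma measurable_approx_ind:
  assumes "\<And>i. i \<in> {1..t} \<Longrightarrow> (\<lambda>\<omega>. x \<omega> i) \<in> borel_measurable N"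
    and [measurable]: "z \<in> borel_measurable N"
  shows "(\<lambda>\<omega>. approx_ind eps (x \<omega>) t (z \<omega>)) \<in> borel_measurable N"
proof -
  have "Measurable.pred N (\<lambda>\<omega>. \<bar>z \<omega> - (\<Sum>i\<in>S. x \<omega> i)\<bar> < eps)" if "S \<subseteq> {1..t}" for S
  proof -
    have "(\<lambda>\<omega>. \<Sum>i\<in>S. x \<omega> i) \<in> borel_measurable N"
      using that assms(1) by (intro borel_measurable_sum) auto
    then show ?thesis by measurable
  qed
  then have "Measurable.pred N (\<lambda>\<omega>. \<exists>S\<in>Pow {1..t}. \<bar>z \<omega> - (\<Sum>i\<in>S. x \<omega> i)\<bar> < eps)"
    by (intro pred_intros_finite) auto
  then show ?thesis
    unfolding approx_ind_def Pow_def by (intro measurable_If) auto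
qed


lemma borel_measurable_approx_ind [measurable]: "approx_ind eps x t \<in> borel_measurable borel"
proof -
  have "(\<lambda>z. approx_ind eps ((\<lambda>_. x) z) t z) \<in> borel_measurable borel"
    by (rule measurable_approx_ind) auto
  then show ?thesis by simp
qed

section \<open>Mass in a unit window\<close>

abbreviation rect :: "real \<Rightarrow> real" where
  "rect \<equiv> indicator {-1..1}"

lemma rect_nonneg: "0 \<le> rect z" and rect_le_1: "rect z \<le> 1"
  by (auto split: split_indicator)

lemma rect_shift_eq_indicator: "rect (z - w) = indicator {z - 1..z + 1} w"
  by (auto split: split_indicator)

lemma integrable_bounded_by_rect:
  fixes f :: "real \<Rightarrow> real"
  assumes "f \<in> borel_measurable borel" "\<And>z. \<bar>f z\<bar> \<le> C * rect z"
  shows "integrable lborel f"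
proof (rule Bochner_Integration.integrable_bound)
  show "integrable lborel (\<lambda>z. C * rect z)" by simp
  show "AE z in lborel. norm (f z) \<le> norm (C * rect z)"
  proof (intro AE_I2)
    fix z show "norm (f z) \<le> norm (C * rect z)" using assms(2)[of z] by simp
  qed
qed (use assms(1) in simp)

lemma integrable_bounded_by_rect2:
  fixes f :: "real \<times> real \<Rightarrow> real"
  assumes "f \<in> borel_measurable (lborel \<Otimes>\<^sub>M lborel)" "\<And>y z. \<bar>f (y, z)\<bar> \<le> rect y * rect z"
  shows "integrable (lborel \<Otimes>\<^sub>M lborel) f"
proof (rule integrableI_bounded_set[where A="{-1..1} \<times> {-1..1}" and B=1])
  show "emeasure (lborel \<Otimes>\<^sub>M lborel) ({-1..1::real} \<times> {-1..1::real}) < \<infinity>"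
    by (simp add: lborel.emeasure_pair_measure_Times ennreal_mult_less_top)
  have "\<bar>f p\<bar> \<le> 1 \<and> (p \<notin> {-1..1} \<times> {-1..1} \<longrightarrow> f p = 0)" for p
    using assms(2)[of "fst p" "snd p"]
    by (cases "fst p \<in> {-1..1}"; cases "snd p \<in> {-1..1}") (auto simp: mem_Times_iff)
  then show "AE p in lborel \<Otimes>\<^sub>M lborel. p \<in> {-1..1} \<times> {-1..1} \<longrightarrow> norm (f p) \<le> 1"
    "AE p in lborel \<Otimes>\<^sub>M lborel. p \<notin> {-1..1} \<times> {-1..1} \<longrightarrow> f p = 0"
    by auto
qed (use assms(1) in auto)

definition window_mass :: "(real \<Rightarrow> real) \<Rightarrow> real \<Rightarrow> real" where
  "window_mass p z = (\<integral>w. p w * rect (z - w) \<partial>lborel)"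

lemma integrable_mult_rect_shift:
  fixes p :: "real \<Rightarrow> real"
  assumes "p \<in> borel_measurable borel" "\<And>w. \<bar>p w\<bar> \<le> C"
  shows "integrable lborel (\<lambda>w. p w * rect (z - w))"
proof (rule Bochner_Integration.integrable_bound)
  show "integrable lborel (\<lambda>w. C * indicator {z - 1..z + 1} w)" by simp
  show "AE w in lborel. norm (p w * rect (z - w)) \<le> norm (C * indicator {z - 1..z + 1} w :: real)"
  proof (intro AE_I2)
    fix w show "norm (p w * rect (z - w)) \<le> norm (C * indicator {z - 1..z + 1} w :: real)"
      using assms(2)[of w] by (auto simp: rect_shift_eq_indicator split: split_indicator)
  qed
qed (use assms(1) in simp)

lemma measurable_window_mass [measurable]:
  assumes [measurable]: "p \<in> borel_measurable borel"
  shows "window_mass p \<in> borel_measurable borel"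
proof -
  have "(\<lambda>(z, w). p w * rect (z - w)) \<in> borel_measurable (lborel \<Otimes>\<^sub>M lborel)" by measurable
  then have "(\<lambda>z. \<integral>w. p w * rect (z - w) \<partial>lborel) \<in> borel_measurable lborel"
    by (rule lborel.borel_measurable_lebesgue_integral)
  then show ?thesis unfolding window_mass_def[abs_def] by simp
qed

lemma window_mass_mono:
  fixes p p' :: "real \<Rightarrow> real"
  assumes "p \<in> borel_measurable borel" "p' \<in> borel_measurable borel"
    and "\<And>w. \<bar>p w\<bar> \<le> C" "\<And>w. \<bar>p' w\<bar> \<le> C" "\<And>w. p w \<le> p' w"
  shows "window_mass p z \<le> window_mass p' z"
  unfolding window_mass_def
  by (rule integral_mono[OF integrable_mult_rect_shift[OF assms(1,3)] integrable_mult_rect_shift[OF assms(2,4)]])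
     (use assms(5) in \<open>auto intro: mult_right_mono\<close>)

lemma window_mass_bounds:
  fixes p :: "real \<Rightarrow> real"
  assumes "p \<in> borel_measurable borel" "\<And>w. 0 \<le> p w \<and> p w \<le> 1"
  shows "0 \<le> window_mass p z" "window_mass p z \<le> 2"
proof -
  show "0 \<le> window_mass p z"
    unfolding window_mass_def using assms(2) by (auto intro!: Bochner_Integration.integral_nonneg)
  have "window_mass p z \<le> window_mass (\<lambda>_. 1) z"
    by (rule window_mass_mono[where C=1]) (use assms in auto)
  also have "\<dots> = 2"
    by (simp add: window_mass_def rect_shift_eq_indicator)
  finally show "window_mass p z \<le> 2" .
qed

lemma window_mass_eq_integral_reflected:
  "window_mass p z = (\<integral>y. rect y * p (z - y) \<partial>lborel)"
  unfolding window_mass_def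
  using lborel_integral_real_affine[where c="-1" and t=z and f="\<lambda>w. p w * rect (z - w)"]
  by (simp add: mult.commute)

lemma window_mass_rect:
  assumes "\<bar>z\<bar> \<le> 1"
  shows "window_mass rect z = 2 - \<bar>z\<bar>"
proof -
  have "rect w * rect (z - w) = indicator {max (-1) (z - 1)..min 1 (z + 1)} w" for w
    by (auto split: split_indicator)
  then have "window_mass rect z = measure lborel {max (-1) (z - 1)..min 1 (z + 1)}"
    by (simp add: window_mass_def)
  also have "\<dots> = 2 - \<bar>z\<bar>"
    using assms by (subst measure_lborel_Icc) (auto simp: min_def max_def)
  finally show ?thesis .
qed

lemma window_mass_ge:
  fixes p :: "real \<Rightarrow> real"
  assumes [measurable]: "p \<in> borel_measurable borel"
    and p: "\<And>w. 0 \<le> p w \<and> p w \<le> rect w" and z: "\<bar>z\<bar> \<le> 1"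
  shows "(\<integral>w. p w \<partial>lborel) - \<bar>z\<bar> \<le> window_mass p z"
proof -
  have p_int: "integrable lborel p"
    by (rule integrable_bounded_by_rect[where C=1]) (use p in auto)
  have rect_rect_int: "integrable lborel (\<lambda>w. rect w * rect (z - w))"
    by (rule integrable_mult_rect_shift[where C=1]) (auto split: split_indicator)
  have p_bound: "\<bar>p w\<bar> \<le> 1" for w using p[of w] rect_le_1[of w] by (metis abs_of_nonneg order_trans)
  have "(\<integral>w. p w \<partial>lborel) - \<bar>z\<bar> = (\<integral>w. p w \<partial>lborel) - (\<integral>w. rect w \<partial>lborel) + window_mass rect z"
    using window_mass_rect[OF z] by simp
  also have "\<dots> = (\<integral>w. p w - rect w + rect w * rect (z - w) \<partial>lborel)"
    using p_int rect_rect_int by (simp add: window_mass_def)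
  also have "\<dots> \<le> window_mass p z"
    unfolding window_mass_def
  proof (rule integral_mono)
    show "integrable lborel (\<lambda>w. p w - rect w + rect w * rect (z - w))"
      using p_int rect_rect_int by simp
    show "integrable lborel (\<lambda>w. p w * rect (z - w))"
      by (rule integrable_mult_rect_shift[OF _ p_bound]) simp
    show "p w - rect w + rect w * rect (z - w) \<le> p w * rect (z - w)" for w
      using p[of w] by (auto split: split_indicator)
  qed
  finally show ?thesis .
qed

lemma integral_rect_mult_excess:
  fixes c :: real
  assumes c: "0 \<le> c" "c \<le> 1"
  shows "(\<integral>z. rect z * max 0 (\<bar>z\<bar> - c) \<partial>lborel) = (1 - c)\<^sup>2"
proof -
  have split: "rect z * max 0 (\<bar>z\<bar> - c)
      = indicator {c..1} z *\<^sub>R (z - c) + indicator {-1..-c} z *\<^sub>R (- z - c)" for z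
    using c by (auto split: split_indicator simp: abs_if max_def)
  have right: "(\<integral>z. indicator {c..1} z *\<^sub>R (z - c) \<partial>lborel)
      = (\<lambda>z. (z - c)\<^sup>2 / 2) 1 - (\<lambda>z. (z - c)\<^sup>2 / 2) c"
    by (rule integral_FTC_atLeastAtMost)
       (use c in \<open>auto intro!: derivative_eq_intros continuous_intros
          simp: has_real_derivative_iff_has_vector_derivative[symmetric] field_simps\<close>)
  have left: "(\<integral>z. indicator {-1..-c} z *\<^sub>R (- z - c) \<partial>lborel)
      = (\<lambda>z. - (z + c)\<^sup>2 / 2) (-c) - (\<lambda>z. - (z + c)\<^sup>2 / 2) (-1)"
    by (rule integral_FTC_atLeastAtMost)
       (use c in \<open>auto intro!: derivative_eq_intros continuous_intros
          simp: has_real_derivative_iff_has_vector_derivative[symmetric] field_simps\<close>)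
  have right_int: "integrable lborel (\<lambda>z. indicator {c..1} z *\<^sub>R (z - c))"
    and left_int: "integrable lborel (\<lambda>z. indicator {-1..-c} z *\<^sub>R (- z - c))"
    by (rule integrableI_bounded_set_indicator[where B=1]; use c in auto)+
  show ?thesis
    unfolding split Bochner_Integration.integral_add[OF right_int left_int] right left
    by (simp add: power2_eq_square field_simps)
qed

lemma integrable_mult_abs:
  fixes q :: "real \<Rightarrow> real"
  assumes "q \<in> borel_measurable borel" and q: "\<And>z. 0 \<le> q z \<and> q z \<le> rect z"
  shows "integrable lborel (\<lambda>z. q z * \<bar>z\<bar>)"
proof (rule integrable_bounded_by_rect[where C=1])
  show "\<bar>q z * \<bar>z\<bar>\<bar> \<le> 1 * rect z" for z
    using q[of z] by (cases "z \<in> {-1..1}") (auto simp: abs_mult intro: mult_le_one)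
qed (use assms(1) in measurable)

lemma integral_mult_abs_le_bathtub:
  fixes q :: "real \<Rightarrow> real"
  assumes [measurable]: "q \<in> borel_measurable borel" and q: "\<And>z. 0 \<le> q z \<and> q z \<le> rect z"
  defines "Q \<equiv> \<integral>z. q z \<partial>lborel"
  shows "(\<integral>z. q z * \<bar>z\<bar> \<partial>lborel) \<le> Q - Q\<^sup>2 / 4"
proof -
  have q_int: "integrable lborel q"
    by (rule integrable_bounded_by_rect[where C=1]) (use q in auto)
  have "0 \<le> Q" unfolding Q_def using q by (intro Bochner_Integration.integral_nonneg) auto
  have "Q \<le> (\<integral>z. rect z \<partial>lborel)"
    unfolding Q_def by (rule integral_mono[OF q_int]) (use q in auto)
  then have "Q \<le> 2" by simp
  define c where "c = 1 - Q / 2"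
  then have c: "0 \<le> c" "c \<le> 1" using \<open>0 \<le> Q\<close> \<open>Q \<le> 2\<close> by auto
  have excess_int: "integrable lborel (\<lambda>z. rect z * max 0 (\<bar>z\<bar> - c))"
    by (rule integrable_bounded_by_rect[where C=1]) (use c in \<open>auto split: split_indicator\<close>)
  \<comment> \<open>bathtub principle: among \<open>0 \<le> q \<le> rect\<close> of mass \<open>Q\<close>,
    the indicator of \<open>c \<le> |z| \<le> 1\<close> maximises the integral\<close>
  have "(\<integral>z. q z * \<bar>z\<bar> \<partial>lborel) \<le> (\<integral>z. c * q z + rect z * max 0 (\<bar>z\<bar> - c) \<partial>lborel)"
  proof (rule integral_mono[OF integrable_mult_abs[OF assms(1) q]])
    show "integrable lborel (\<lambda>z. c * q z + rect z * max 0 (\<bar>z\<bar> - c))"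
      using q_int excess_int by simp
    fix z
    have "q z * (\<bar>z\<bar> - c) \<le> q z * max 0 (\<bar>z\<bar> - c)" using q[of z] by (intro mult_left_mono) auto
    also have "\<dots> \<le> rect z * max 0 (\<bar>z\<bar> - c)" using q[of z] by (intro mult_right_mono) auto
    finally show "q z * \<bar>z\<bar> \<le> c * q z + rect z * max 0 (\<bar>z\<bar> - c)" by (simp add: algebra_simps)
  qed
  also have "\<dots> = c * Q + (1 - c)\<^sup>2"
    using q_int excess_int integral_rect_mult_excess[OF c] by (simp add: Q_def)
  also have "\<dots> = Q - Q\<^sup>2 / 4"
    by (simp add: c_def power2_eq_square algebra_simps)
  finally show ?thesis .
qed

lemma integrable_mult_window_mass:
  fixes p q :: "real \<Rightarrow> real"
  assumes [measurable]: "p \<in> borel_measurable borel" "q \<in> borel_measurable borel"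
    and p: "\<And>w. 0 \<le> p w \<and> p w \<le> 1" and q: "\<And>z. 0 \<le> q z \<and> q z \<le> rect z"
  shows "integrable lborel (\<lambda>z. q z * window_mass p z)"
proof (rule integrable_bounded_by_rect[where C=2])
  fix z
  have "0 \<le> window_mass p z" "window_mass p z \<le> 2"
    using window_mass_bounds[OF assms(1) p] by auto
  then have "q z * window_mass p z \<le> rect z * 2" "0 \<le> q z * window_mass p z"
    using q[of z] by (auto intro: mult_mono)
  then show "\<bar>q z * window_mass p z\<bar> \<le> 2 * rect z" by simp
qed simp

lemma integral_mult_window_mass_ge:
  fixes p q :: "real \<Rightarrow> real"
  assumes [measurable]: "p \<in> borel_measurable borel" "q \<in> borel_measurable borel"
    and p: "\<And>w. 0 \<le> p w \<and> p w \<le> rect w" and q: "\<And>z. 0 \<le> q z \<and> q z \<le> rect z"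
  defines "P \<equiv> \<integral>w. p w \<partial>lborel" and "Q \<equiv> \<integral>z. q z \<partial>lborel"
  shows "P * Q - Q + Q\<^sup>2 / 4 \<le> (\<integral>z. q z * window_mass p z \<partial>lborel)"
proof -
  have p1: "0 \<le> p w \<and> p w \<le> 1" for w using p[of w] rect_le_1[of w] by linarith
  have q_int: "integrable lborel q"
    by (rule integrable_bounded_by_rect[where C=1]) (use q in auto)
  have q_abs_int: "integrable lborel (\<lambda>z. q z * \<bar>z\<bar>)"
    by (rule integrable_mult_abs[OF assms(2) q])
  have q_mass_int: "integrable lborel (\<lambda>z. q z * window_mass p z)"
    by (rule integrable_mult_window_mass[OF assms(1,2) p1 q])
  have "P * Q - Q + Q\<^sup>2 / 4 \<le> P * Q - (\<integral>z. q z * \<bar>z\<bar> \<partial>lborel)"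
    using integral_mult_abs_le_bathtub[OF assms(2) q] by (simp add: Q_def)
  also have "\<dots> = (\<integral>z. q z * (P - \<bar>z\<bar>) \<partial>lborel)"
    using q_int q_abs_int by (simp add: Q_def right_diff_distrib mult.commute)
  also have "\<dots> \<le> (\<integral>z. q z * window_mass p z \<partial>lborel)"
  proof (rule integral_mono[OF _ q_mass_int])
    show "integrable lborel (\<lambda>z. q z * (P - \<bar>z\<bar>))"
      using q_int q_abs_int by (simp add: right_diff_distrib)
    show "q z * (P - \<bar>z\<bar>) \<le> q z * window_mass p z" for z
    proof (cases "\<bar>z\<bar> \<le> 1")
      case True
      then show ?thesis
        using window_mass_ge[OF assms(1) p True] q[of z] by (intro mult_left_mono) (auto simp: P_def)
    next
      case False
      then have "q z = 0" using q[of z] by (auto split: split_indicator_asm)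
      then show ?thesis by simp
    qed
  qed
  finally show ?thesis .
qed

lemma integral_mult_window_mass_commute:
  fixes p q :: "real \<Rightarrow> real"
  assumes [measurable]: "p \<in> borel_measurable borel" "q \<in> borel_measurable borel"
    and p: "\<And>w. \<bar>p w\<bar> \<le> rect w" and q: "\<And>z. \<bar>q z\<bar> \<le> rect z"
  shows "(\<integral>z. q z * window_mass p z \<partial>lborel) = (\<integral>w. p w * window_mass q w \<partial>lborel)"
proof -
  have "integrable (lborel \<Otimes>\<^sub>M lborel) (\<lambda>(z, w). q z * p w * rect (z - w))"
  proof (rule integrable_bounded_by_rect2)
    fix z w
    have "\<bar>q z * p w * rect (z - w)\<bar> \<le> \<bar>q z\<bar> * \<bar>p w\<bar>"
      by (auto simp: abs_mult split: split_indicator)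
    also have "\<dots> \<le> rect z * rect w"
      using q[of z] p[of w] by (intro mult_mono) (auto simp: rect_nonneg)
    finally show "\<bar>case (z, w) of (z, w) \<Rightarrow> q z * p w * rect (z - w)\<bar> \<le> rect z * rect w"
      by simp
  qed measurable
  then have Fubini: "(\<integral>z. (\<integral>w. q z * p w * rect (z - w) \<partial>lborel) \<partial>lborel)
      = (\<integral>w. (\<integral>z. q z * p w * rect (z - w) \<partial>lborel) \<partial>lborel)"
    by (rule lborel_pair.Fubini_integral[symmetric])
  have "(\<integral>z. q z * window_mass p z \<partial>lborel)
      = (\<integral>z. (\<integral>w. q z * p w * rect (z - w) \<partial>lborel) \<partial>lborel)"
    by (simp add: window_mass_def mult.assoc)
  also have "\<dots> = (\<integral>w. (\<integral>z. p w * (q z * rect (w - z)) \<partial>lborel) \<partial>lborel)"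
    unfolding Fubini by (intro Bochner_Integration.integral_cong refl) (auto split: split_indicator)
  also have "\<dots> = (\<integral>w. p w * window_mass q w \<partial>lborel)"
    by (simp add: window_mass_def)
  finally show ?thesis .
qed

lemma product_div_4_le_of_sum_eq_2:
  fixes P Q :: real
  assumes "P + Q = 2" "0 \<le> Q" "Q \<le> 1"
  shows "P * Q / 4 \<le> P * Q - Q + Q\<^sup>2 / 4"
proof -
  have "P = 2 - Q" using assms(1) by simp
  have "0 \<le> Q * (1 - Q) / 2" using assms(2,3) by simp
  also have "\<dots> = P * Q - Q + Q\<^sup>2 / 4 - P * Q / 4"
    unfolding \<open>P = 2 - Q\<close> by (simp add: power2_eq_square field_simps)
  finally show ?thesis by simp
qed

lemma integral_mult_window_mass_ge_product:
  fixes p q :: "real \<Rightarrow> real"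
  assumes [measurable]: "p \<in> borel_measurable borel" "q \<in> borel_measurable borel"
    and p: "\<And>w. 0 \<le> p w \<and> p w \<le> rect w" and q: "\<And>z. 0 \<le> q z \<and> q z \<le> rect z"
    and mass: "(\<integral>w. p w \<partial>lborel) + (\<integral>z. q z \<partial>lborel) = 2"
  shows "(\<integral>w. p w \<partial>lborel) * (\<integral>z. q z \<partial>lborel) / 4 \<le> (\<integral>z. q z * window_mass p z \<partial>lborel)"
proof -
  define P Q where "P = (\<integral>w. p w \<partial>lborel)" and "Q = (\<integral>z. q z \<partial>lborel)"
  have "0 \<le> Q" unfolding Q_def using q by (intro Bochner_Integration.integral_nonneg) auto
  have "0 \<le> P" unfolding P_def using p by (intro Bochner_Integration.integral_nonneg) auto
  show ?thesis
  proof (cases "Q \<le> 1")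
    case True
    have "P * Q / 4 \<le> P * Q - Q + Q\<^sup>2 / 4"
      using mass True \<open>0 \<le> Q\<close> by (intro product_div_4_le_of_sum_eq_2) (simp_all add: P_def Q_def)
    then show ?thesis
      using integral_mult_window_mass_ge[OF assms(1-4)] by (simp add: P_def Q_def)
  next
    case False
    have "Q * P / 4 \<le> Q * P - P + P\<^sup>2 / 4"
      using mass False \<open>0 \<le> P\<close> by (intro product_div_4_le_of_sum_eq_2) (simp_all add: P_def Q_def)
    also have "\<dots> \<le> (\<integral>w. p w * window_mass q w \<partial>lborel)"
      using integral_mult_window_mass_ge[OF assms(2,1) q p] by (simp add: P_def Q_def)
    also have "\<dots> = (\<integral>z. q z * window_mass p z \<partial>lborel)"
      using p q by (intro integral_mult_window_mass_commute[symmetric]) auto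
    finally show ?thesis by (simp add: P_def Q_def mult.commute)
  qed
qed

lemma integrable_rect_shift_product:
  fixes b g :: "real \<Rightarrow> real"
  assumes [measurable]: "b \<in> borel_measurable borel" "g \<in> borel_measurable borel"
    and b: "\<And>z. \<bar>b z\<bar> \<le> rect z" and g: "\<And>w. \<bar>g w\<bar> \<le> 1"
  shows "integrable (lborel \<Otimes>\<^sub>M lborel) (\<lambda>(y, z). rect y * b z * g (z - y))"
proof (rule integrable_bounded_by_rect2)
  fix y z
  have "\<bar>rect y * b z * g (z - y)\<bar> \<le> rect y * rect z * 1"
    unfolding abs_mult using b[of z] g[of "z - y"]
    by (intro mult_mono) (auto simp: rect_nonneg)
  then show "\<bar>case (y, z) of (y, z) \<Rightarrow> rect y * b z * g (z - y)\<bar> \<le> rect y * rect z"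
    by simp
qed measurable

lemma integrable_rect_mult_shifted_integral:
  fixes b g :: "real \<Rightarrow> real"
  assumes "b \<in> borel_measurable borel" "g \<in> borel_measurable borel"
    and "\<And>z. \<bar>b z\<bar> \<le> rect z" "\<And>w. \<bar>g w\<bar> \<le> 1"
  shows "integrable lborel (\<lambda>y. rect y * (\<integral>z. b z * g (z - y) \<partial>lborel))"
  using lborel_pair.integrable_fst'[OF integrable_rect_shift_product[OF assms]]
  by (simp add: mult.assoc)

lemma integral_rect_mult_shifted_integral:
  fixes b g :: "real \<Rightarrow> real"
  assumes "b \<in> borel_measurable borel" "g \<in> borel_measurable borel"
    and "\<And>z. \<bar>b z\<bar> \<le> rect z" "\<And>w. \<bar>g w\<bar> \<le> 1"
  shows "(\<integral>y. rect y * (\<integral>z. b z * g (z - y) \<partial>lborel) \<partial>lborel)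
       = (\<integral>z. b z * window_mass g z \<partial>lborel)"
proof -
  have "(\<integral>y. rect y * (\<integral>z. b z * g (z - y) \<partial>lborel) \<partial>lborel)
      = (\<integral>y. (\<integral>z. rect y * b z * g (z - y) \<partial>lborel) \<partial>lborel)"
    by (simp add: mult.assoc)
  also have "\<dots> = (\<integral>z. (\<integral>y. rect y * b z * g (z - y) \<partial>lborel) \<partial>lborel)"
    using lborel_pair.Fubini_integral[OF integrable_rect_shift_product[OF assms]] by simp
  also have "\<dots> = (\<integral>z. b z * (\<integral>y. rect y * g (z - y) \<partial>lborel) \<partial>lborel)"
    by (simp add: mult_ac)
  also have "\<dots> = (\<integral>z. b z * window_mass g z \<partial>lborel)"
    by (simp add: window_mass_eq_integral_reflected)
  finally show ?thesis .
qed

lemma integral_shift_overlap_ge: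
  fixes g :: "real \<Rightarrow> real"
  assumes [measurable]: "g \<in> borel_measurable borel" and g: "\<And>z. 0 \<le> g z \<and> g z \<le> 1"
  shows "(\<integral>z. rect z * g z \<partial>lborel) * (\<integral>z. rect z * (1 - g z) \<partial>lborel) / 4
    \<le> (\<integral>y. rect y * (\<integral>z. rect z * (1 - g z) * g (z - y) \<partial>lborel) \<partial>lborel)"
proof -
  define a b where "a z = rect z * g z" and "b z = rect z * (1 - g z)" for z
  have [measurable]: "a \<in> borel_measurable borel" "b \<in> borel_measurable borel"
    unfolding a_def[abs_def] b_def[abs_def] by measurable
  have a: "0 \<le> a z \<and> a z \<le> rect z" and b: "0 \<le> b z \<and> b z \<le> rect z" for z
    unfolding a_def b_def using g[of z] by (auto split: split_indicator)
  have a_unit: "0 \<le> a z \<and> a z \<le> 1" and a_le_g: "a z \<le> g z" for z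
    unfolding a_def using g[of z] by (auto split: split_indicator)
  have "(\<integral>z. a z \<partial>lborel) + (\<integral>z. b z \<partial>lborel) = (\<integral>z. rect z \<partial>lborel)"
    using a b by (simp add: a_def b_def algebra_simps integrable_bounded_by_rect[where C=1]
        flip: Bochner_Integration.integral_add)
  then have "(\<integral>z. a z \<partial>lborel) * (\<integral>z. b z \<partial>lborel) / 4 \<le> (\<integral>z. b z * window_mass a z \<partial>lborel)"
    by (intro integral_mult_window_mass_ge_product a b) auto
  also have "\<dots> \<le> (\<integral>z. b z * window_mass g z \<partial>lborel)"
  proof (rule integral_mono[OF integrable_mult_window_mass integrable_mult_window_mass])
    show "b z * window_mass a z \<le> b z * window_mass g z" for z
      using a_unit a_le_g b g by (intro mult_left_mono window_mass_mono[where C=1]) auto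
  qed (use a_unit b g in auto)
  also have "\<dots> = (\<integral>y. rect y * (\<integral>z. b z * g (z - y) \<partial>lborel) \<partial>lborel)"
    using b g by (intro integral_rect_mult_shifted_integral[symmetric]) auto
  finally show ?thesis by (simp add: a_def b_def)
qed

lemma average_union_with_shift_ge:
  fixes g :: "real \<Rightarrow> real"
  assumes [measurable]: "g \<in> borel_measurable borel" and g01: "\<And>z. g z = 0 \<or> g z = 1"
  defines "v \<equiv> (1/2) * (\<integral>z. rect z * g z \<partial>lborel)"
  shows "v * (1 + (1/4) * (1 - v))
    \<le> (1/4) * (\<integral>y. rect y * (\<integral>z. rect z * max (g z) (g (z - y)) \<partial>lborel) \<partial>lborel)"
proof -
  define \<alpha> \<beta> where "\<alpha> = (\<integral>z. rect z * g z \<partial>lborel)" and "\<beta> = (\<integral>z. rect z * (1 - g z) \<partial>lborel)"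
  define J where "J y = (\<integral>z. rect z * (1 - g z) * g (z - y) \<partial>lborel)" for y
  have g: "0 \<le> g z \<and> g z \<le> 1" for z using g01[of z] by auto
  have rect_g_int: "integrable lborel (\<lambda>z. rect z * g z)"
    and rect_g'_int: "integrable lborel (\<lambda>z. rect z * (1 - g z))"
    using g by (auto intro!: integrable_bounded_by_rect[where C=1] split: split_indicator)
  have overlap_int: "integrable lborel (\<lambda>z. rect z * (1 - g z) * g (z - y))" for y
  proof (rule integrable_bounded_by_rect[where C=1])
    show "\<bar>rect z * (1 - g z) * g (z - y)\<bar> \<le> 1 * rect z" for z
      using g[of z] g[of "z - y"] by (auto simp: abs_mult split: split_indicator intro: mult_le_one)
  qed simp
  have "\<alpha> + \<beta> = 2"
    using rect_g_int rect_g'_int by (simp add: \<alpha>_def \<beta>_def algebra_simps flip: Bochner_Integration.integral_add)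
  have union: "(\<integral>z. rect z * max (g z) (g (z - y)) \<partial>lborel) = \<alpha> + J y" for y
  proof -
    have "rect z * max (g z) (g (z - y)) = rect z * g z + rect z * (1 - g z) * g (z - y)" for z
      using g01[of z] g01[of "z - y"] by auto
    then show ?thesis
      using rect_g_int overlap_int by (simp add: \<alpha>_def J_def)
  qed
  have "integrable lborel (\<lambda>y. rect y * J y)"
    unfolding J_def using g by (intro integrable_rect_mult_shifted_integral) (auto split: split_indicator)
  then have decomposition: "(\<integral>y. rect y * (\<integral>z. rect z * max (g z) (g (z - y)) \<partial>lborel) \<partial>lborel)
      = 2 * \<alpha> + (\<integral>y. rect y * J y \<partial>lborel)"
    by (simp add: union distrib_left)
  have v_eq: "v = \<alpha> / 2" and \<beta>_eq: "\<beta> = 2 - \<alpha>"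
    using \<open>\<alpha> + \<beta> = 2\<close> by (simp_all add: v_def \<alpha>_def)
  have "v * (1 + (1/4) * (1 - v)) = (1/4) * (2 * \<alpha> + \<alpha> * \<beta> / 4)"
    unfolding v_eq \<beta>_eq by (simp add: field_simps)
  also have "\<dots> \<le> (1/4) * (2 * \<alpha> + (\<integral>y. rect y * J y \<partial>lborel))"
    unfolding \<alpha>_def \<beta>_def J_def using g by (intro mult_left_mono add_left_mono integral_shift_overlap_ge) auto
  also have "\<dots> = (1/4) * (\<integral>y. rect y * (\<integral>z. rect z * max (g z) (g (z - y)) \<partial>lborel) \<partial>lborel)"
    unfolding decomposition ..
  finally show ?thesis .
qed

section \<open>One step, for fixed values of the first variables\<close>

lemma integral_uniform_measure_rect:
  fixes f :: "real \<Rightarrow> real"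
  assumes [measurable]: "f \<in> borel_measurable borel"
  shows "(\<integral>y. f y \<partial>uniform_measure lborel {-1..1}) = (1/2) * (\<integral>y. rect y * f y \<partial>lborel)"
proof -
  have "uniform_measure lborel {-1..1::real} = density lborel (\<lambda>y. ennreal (rect y / 2))"
    unfolding uniform_measure_def
    by (intro density_cong) (auto split: split_indicator simp: divide_ennreal divide_ennreal_def)
  then have "(\<integral>y. f y \<partial>uniform_measure lborel {-1..1}) = (\<integral>y. (rect y / 2) *\<^sub>R f y \<partial>lborel)"
    by (simp add: integral_density)
  also have "\<dots> = (1/2) * (\<integral>y. rect y * f y \<partial>lborel)"
    by (simp add: integral_mult_right_zero[symmetric] mult_ac)
  finally show ?thesis .
qed

lemma integrable_rect_mult_approx_ind: "integrable lborel (\<lambda>z. rect z * approx_ind eps x t z)"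
proof (rule integrable_bounded_by_rect[where C=1])
  show "\<bar>rect z * approx_ind eps x t z\<bar> \<le> 1 * rect z" for z
    using approx_ind_eq_0_or_1[of eps x t z] by (auto split: split_indicator)
qed measurable

lemma approx_frac_eq_lebesgue_integral:
  "approx_frac eps x t = (1/2) * (\<integral>z. rect z * approx_ind eps x t z \<partial>lborel)"
proof -
  have "set_integrable lborel {-1..1} (approx_ind eps x t)"
    using integrable_rect_mult_approx_ind by (simp add: set_integrable_def)
  from set_borel_integral_eq_integral(2)[OF this] show ?thesis
    unfolding approx_frac_def set_lebesgue_integral_def by simp
qed

lemma measurable_approx_frac:
  assumes "\<And>i. i \<in> {1..t} \<Longrightarrow> (\<lambda>\<omega>. x \<omega> i) \<in> borel_measurable N"
  shows "(\<lambda>\<omega>. approx_frac eps (x \<omega>) t) \<in> borel_measurable N"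
proof -
  have "(\<lambda>p. approx_ind eps (x (fst p)) t (snd p)) \<in> borel_measurable (N \<Otimes>\<^sub>M lborel)"
    using assms by (intro measurable_approx_ind) auto
  then have "(\<lambda>p. rect (snd p) * approx_ind eps (x (fst p)) t (snd p)) \<in> borel_measurable (N \<Otimes>\<^sub>M lborel)"
    by measurable
  then have "(\<lambda>\<omega>. \<integral>z. rect z * approx_ind eps (x \<omega>) t z \<partial>lborel) \<in> borel_measurable N"
    by (intro lborel.borel_measurable_lebesgue_integral) (simp add: case_prod_beta')
  then show ?thesis
    unfolding approx_frac_eq_lebesgue_integral by measurable
qed

lemma measurable_approx_frac_update:
  assumes "\<And>i. i \<in> {1..t} \<Longrightarrow> X i \<in> borel_measurable N"
  shows "(\<lambda>p. approx_frac eps ((\<lambda>i. X i (fst p))(Suc t := snd p)) (Suc t)) \<in> borel_measurable (N \<Otimes>\<^sub>M borel)"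
proof (rule measurable_approx_frac)
  fix i assume i: "i \<in> {1..Suc t}"
  show "(\<lambda>p. ((\<lambda>i. X i (fst p))(Suc t := snd p)) i) \<in> borel_measurable (N \<Otimes>\<^sub>M borel)"
  proof (cases "i = Suc t")
    case False
    then have [measurable]: "X i \<in> borel_measurable N" using i assms by auto
    have "(\<lambda>p. X i (fst p)) \<in> borel_measurable (N \<Otimes>\<^sub>M borel)" by measurable
    then show ?thesis using False by simp
  qed simp
qed

lemma approx_frac_bounds: "0 \<le> approx_frac eps x t" "approx_frac eps x t \<le> 1"
proof -
  have bounds: "0 \<le> rect z * approx_ind eps x t z \<and> rect z * approx_ind eps x t z \<le> rect z" for z
    using approx_ind_eq_0_or_1[of eps x t z] by (auto split: split_indicator)
  have "(\<integral>z. rect z * approx_ind eps x t z \<partial>lborel) \<le> (\<integral>z. rect z \<partial>lborel)"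
    using bounds integrable_rect_mult_approx_ind by (intro integral_mono) auto
  moreover have "0 \<le> (\<integral>z. rect z * approx_ind eps x t z \<partial>lborel)"
    using bounds by (intro Bochner_Integration.integral_nonneg) auto
  ultimately show "0 \<le> approx_frac eps x t" "approx_frac eps x t \<le> 1"
    unfolding approx_frac_eq_lebesgue_integral by simp_all
qed

lemma integral_uniform_approx_frac_Suc_ge:
  "approx_frac eps x t * (1 + (1/4) * (1 - approx_frac eps x t))
     \<le> (\<integral>y. approx_frac eps (x(Suc t := y)) (Suc t) \<partial>uniform_measure lborel {-1..1})"
proof -
  define g where "g = approx_ind eps x t"
  have g01: "g z = 0 \<or> g z = 1" for z
    unfolding g_def by (rule approx_ind_eq_0_or_1)
  have step: "approx_frac eps (x(Suc t := y)) (Suc t) = (1/2) * (\<integral>z. rect z * max (g z) (g (z - y)) \<partial>lborel)" for y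
  proof -
    have "approx_ind eps (x(Suc t := y)) (Suc t) z = max (g z) (g (z - y))" for z
      unfolding approx_ind_Suc g_def by (subst (1 2) approx_ind_cong[where x' = x]) auto
    then show ?thesis unfolding approx_frac_eq_lebesgue_integral by simp
  qed
  have measurable: "(\<lambda>y. approx_frac eps (x(Suc t := y)) (Suc t)) \<in> borel_measurable borel"
    by (rule measurable_approx_frac) auto
  have g_measurable: "g \<in> borel_measurable borel"
    unfolding g_def by (rule borel_measurable_approx_ind)
  have frac_eq: "approx_frac eps x t = (1/2) * (\<integral>z. rect z * g z \<partial>lborel)"
    unfolding approx_frac_eq_lebesgue_integral g_def ..
  have "approx_frac eps x t * (1 + (1/4) * (1 - approx_frac eps x t))
      \<le> (1/4) * (\<integral>y. rect y * (\<integral>z. rect z * max (g z) (g (z - y)) \<partial>lborel) \<partial>lborel)"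
    unfolding frac_eq by (rule average_union_with_shift_ge[OF g_measurable g01])
  also have "\<dots> = (1/2) * (\<integral>y. rect y * ((1/2) * (\<integral>z. rect z * max (g z) (g (z - y)) \<partial>lborel)) \<partial>lborel)"
    by (simp add: mult_ac)
  also have "\<dots> = (\<integral>y. approx_frac eps (x(Suc t := y)) (Suc t) \<partial>uniform_measure lborel {-1..1})"
    unfolding integral_uniform_measure_rect[OF measurable] by (simp only: step)
  finally show ?thesis .
qed

section \<open>Conditioning on the first variables\<close>

lemma space_gen_sigma: "space (gen_sigma M X t) = space M"
  and sets_gen_sigma:
    "sets (gen_sigma M X t) = sigma_sets (space M) (\<Union>i\<in>{1..t}. {X i -` A \<inter> space M | A. A \<in> sets borel})"
proof -
  have generators: "{X i -` A \<inter> space M | i A. i \<in> {1..t} \<and> A \<in> sets borel}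
      = (\<Union>i\<in>{1..t}. {X i -` A \<inter> space M | A. A \<in> sets borel})"
    by blast
  have "(\<Union>i\<in>{1..t}. {X i -` A \<inter> space M | A. A \<in> sets borel}) \<subseteq> Pow (space M)" by auto
  then show "space (gen_sigma M X t) = space M"
    "sets (gen_sigma M X t) = sigma_sets (space M) (\<Union>i\<in>{1..t}. {X i -` A \<inter> space M | A. A \<in> sets borel})"
    unfolding gen_sigma_def generators by (simp_all add: space_measure_of sets_measure_of)
qed

lemma measurable_gen_sigma:
  assumes "i \<in> {1..t}"
  shows "X i \<in> borel_measurable (gen_sigma M X t)"
proof (rule measurableI)
  fix A :: "real set" assume "A \<in> sets borel"
  then show "X i -` A \<inter> space (gen_sigma M X t) \<in> sets (gen_sigma M X t)"
    using assms unfolding space_gen_sigma sets_gen_sigma by (intro sigma_sets.Basic) blast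
qed auto

lemma subalgebra_gen_sigma:
  assumes "\<And>i. i \<in> {1..t} \<Longrightarrow> X i \<in> borel_measurable M"
  shows "subalgebra M (gen_sigma M X t)"
  unfolding subalgebra_def space_gen_sigma sets_gen_sigma
  using assms by (intro conjI refl sets.sigma_sets_subset) auto

lemma (in prob_space) indep_set_gen_sigma_Suc:
  assumes indep: "indep_vars (\<lambda>_. borel) X {1..n}" and "t < n"
  shows "indep_set (sets (gen_sigma M X t))
    (sigma_sets (space M) {X (Suc t) -` A \<inter> space M | A. A \<in> sets borel})"
proof -
  define E where "E i = {X i -` A \<inter> space M | A. A \<in> sets borel}" for i
  define I where "I b = (if b then {1..t} else {Suc t})" for b
  have "indep_sets (\<lambda>b. sigma_sets (space M) (\<Union>i\<in>I b. E i)) UNIV"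
  proof (rule indep_sets_collect_sigma)
    have indep_E: "indep_sets E {1..n}" using indep unfolding indep_vars_def2 E_def by simp
    show "indep_sets E (\<Union>b. I b)"
      by (rule indep_sets_mono_index[OF _ indep_E]) (use \<open>t < n\<close> in \<open>auto simp: I_def\<close>)
    show "Int_stable (E i)" for i
    proof (rule Int_stableI)
      fix a b assume "a \<in> E i" "b \<in> E i"
      then obtain A B where "a = X i -` A \<inter> space M" "b = X i -` B \<inter> space M" "A \<in> sets borel" "B \<in> sets borel"
        unfolding E_def by auto
      then show "a \<inter> b \<in> E i" unfolding E_def by (intro CollectI exI[of _ "A \<inter> B"]) auto
    qed
    show "disjoint_family_on I UNIV" unfolding disjoint_family_on_def I_def by auto
  qed
  then show ?thesis
    unfolding indep_set_def sets_gen_sigma E_def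
    by (rule indep_sets_cong[THEN iffD1, rotated -1]) (auto simp: I_def split: bool.split)
qed

lemma (in prob_space) distr_Pair_eq_pair_measure_indep:
  assumes F: "subalgebra M F" and Y: "Y \<in> measurable M N"
    and indep: "indep_set (sets F) (sigma_sets (space M) {Y -` A \<inter> space M | A. A \<in> sets N})"
  shows "distr M F (\<lambda>\<omega>. \<omega>) \<Otimes>\<^sub>M distr M N Y = distr M (F \<Otimes>\<^sub>M N) (\<lambda>\<omega>. (\<omega>, Y \<omega>))"
proof -
  let ?MF = "distr M F (\<lambda>\<omega>. \<omega>)" and ?MY = "distr M N Y"
  have id_measurable: "(\<lambda>\<omega>. \<omega>) \<in> measurable M F"
    using F unfolding subalgebra_def by (intro measurableI) auto
  have pair_measurable: "(\<lambda>\<omega>. (\<omega>, Y \<omega>)) \<in> measurable M (F \<Otimes>\<^sub>M N)"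
    using id_measurable Y by (rule measurable_Pair)
  interpret MF: prob_space ?MF by (rule prob_space_distr[OF id_measurable])
  interpret MY: prob_space ?MY by (rule prob_space_distr[OF Y])
  show ?thesis
  proof (rule pair_measure_eqI)
    show "sigma_finite_measure ?MF" "sigma_finite_measure ?MY" by unfold_locales
    show "sets (?MF \<Otimes>\<^sub>M ?MY) = sets (distr M (F \<Otimes>\<^sub>M N) (\<lambda>\<omega>. (\<omega>, Y \<omega>)))"
      by (simp cong: sets_pair_measure_cong)
    fix A B assume "A \<in> sets ?MF" and "B \<in> sets ?MY"
    then have AF: "A \<in> sets F" and BN: "B \<in> sets N" by simp_all
    have AM: "A \<in> sets M" using AF F unfolding subalgebra_def by auto
    have "emeasure (distr M (F \<Otimes>\<^sub>M N) (\<lambda>\<omega>. (\<omega>, Y \<omega>))) (A \<times> B)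
        = emeasure M (A \<inter> (Y -` B \<inter> space M))"
      using AF BN sets.sets_into_space[OF AM]
      by (subst emeasure_distr[OF pair_measurable]) (auto intro!: arg_cong[where f="emeasure M"])
    also have "\<dots> = emeasure M A * emeasure M (Y -` B \<inter> space M)"
    proof -
      have "Y -` B \<inter> space M \<in> sigma_sets (space M) {Y -` A \<inter> space M | A. A \<in> sets N}"
        using BN by (intro sigma_sets.Basic) auto
      from indep_setD[OF indep AF this] show ?thesis
        by (simp add: emeasure_eq_measure ennreal_mult measure_nonneg)
    qed
    also have "\<dots> = emeasure ?MF A * emeasure ?MY B"
      using AF AM BN sets.sets_into_space[OF AM]
      by (simp add: emeasure_distr[OF id_measurable] emeasure_distr[OF Y] Int_absorb2)
    finally show "emeasure ?MF A * emeasure ?MY B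
        = emeasure (distr M (F \<Otimes>\<^sub>M N) (\<lambda>\<omega>. (\<omega>, Y \<omega>))) (A \<times> B)" by simp
  qed
qed

lemma (in prob_space) real_cond_exp_freezing:
  assumes F: "subalgebra M F" and Y [measurable]: "Y \<in> measurable M N"
    and indep: "indep_set (sets F) (sigma_sets (space M) {Y -` A \<inter> space M | A. A \<in> sets N})"
    and H: "H \<in> borel_measurable (F \<Otimes>\<^sub>M N)" and H_bounded: "\<And>p. \<bar>H p\<bar> \<le> B"
  shows "AE \<omega> in M. real_cond_exp M F (\<lambda>\<omega>. H (\<omega>, Y \<omega>)) \<omega> = (\<integral>y. H (\<omega>, y) \<partial>distr M N Y)"
proof -
  interpret F: finite_measure_subalgebra M F
    by unfold_locales (rule F)
  let ?MF = "distr M F (\<lambda>\<omega>. \<omega>)" and ?MY = "distr M N Y"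
  have id_measurable: "(\<lambda>\<omega>. \<omega>) \<in> measurable M F"
    using F unfolding subalgebra_def by (intro measurableI) auto
  interpret MF: prob_space ?MF by (rule prob_space_distr[OF id_measurable])
  interpret MY: prob_space ?MY by (rule prob_space_distr[OF Y])
  interpret P: pair_prob_space ?MF ?MY ..
  have pair_measurable: "(\<lambda>\<omega>. (\<omega>, Y \<omega>)) \<in> measurable M (F \<Otimes>\<^sub>M N)"
    using id_measurable Y by (rule measurable_Pair)
  have sets_eq: "sets (?MF \<Otimes>\<^sub>M ?MY) = sets (F \<Otimes>\<^sub>M N)"
    by (rule sets_pair_measure_cong) auto
  have H': "H \<in> borel_measurable (?MF \<Otimes>\<^sub>M ?MY)"
    unfolding measurable_cong_sets[OF sets_eq refl] by (rule H)
  have H_bounds: "- B \<le> H p \<and> H p \<le> B" for p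
    using H_bounded[of p] by auto
  define W where "W \<omega> = (\<integral>y. H (\<omega>, y) \<partial>?MY)" for \<omega>
  have W_measurable: "W \<in> borel_measurable F"
    unfolding W_def using H' by (intro MY.borel_measurable_lebesgue_integral) simp
  have W_bounded: "\<bar>W \<omega>\<bar> \<le> B" if "\<omega> \<in> space M" for \<omega>
  proof -
    have "integrable ?MY (\<lambda>y. H (\<omega>, y))"
      using measurable_Pair2[OF H'] that F H_bounded
      by (intro MY.integrable_const_bound[where B=B]) (auto simp: subalgebra_def)
    then show ?thesis
      unfolding W_def abs_le_iff using H_bounds
      by (auto intro!: MY.integral_le_const MY.integral_ge_const simp: minus_le_iff)
  qed
  have "(\<integral>\<omega>\<in>A. H (\<omega>, Y \<omega>) \<partial>M) = (\<integral>\<omega>\<in>A. W \<omega> \<partial>M)" if A: "A \<in> sets F" for A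
  proof -
    define G where "G p = indicator A (fst p) * H p" for p
    have G_measurable: "G \<in> borel_measurable (F \<Otimes>\<^sub>M N)"
      unfolding G_def[abs_def] using H A by measurable
    have G_int: "integrable (?MF \<Otimes>\<^sub>M ?MY) G"
    proof (rule P.integrable_const_bound[where B=B])
      show "AE p in ?MF \<Otimes>\<^sub>M ?MY. norm (G p) \<le> B"
        using H_bounded by (auto simp: G_def split: split_indicator intro: order_trans[OF _ H_bounded])
      show "G \<in> borel_measurable (?MF \<Otimes>\<^sub>M ?MY)"
        unfolding measurable_cong_sets[OF sets_eq refl] by (rule G_measurable)
    qed
    have "(\<integral>\<omega>\<in>A. H (\<omega>, Y \<omega>) \<partial>M) = (\<integral>\<omega>. G (\<omega>, Y \<omega>) \<partial>M)"
      unfolding set_lebesgue_integral_def G_def by simp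
    also have "\<dots> = (\<integral>p. G p \<partial>distr M (F \<Otimes>\<^sub>M N) (\<lambda>\<omega>. (\<omega>, Y \<omega>)))"
      by (rule integral_distr[OF pair_measurable G_measurable, symmetric])
    also have "\<dots> = (\<integral>\<omega>. (\<integral>y. G (\<omega>, y) \<partial>?MY) \<partial>?MF)"
      unfolding distr_Pair_eq_pair_measure_indep[OF F Y indep, symmetric]
      by (rule P.integral_fst'[OF G_int, symmetric])
    also have "\<dots> = (\<integral>\<omega>. indicator A \<omega> * W \<omega> \<partial>M)"
      unfolding G_def W_def
      by (simp, rule integral_distr[OF id_measurable]) (use A W_measurable[unfolded W_def] in measurable)
    also have "\<dots> = (\<integral>\<omega>\<in>A. W \<omega> \<partial>M)"
      unfolding set_lebesgue_integral_def by simp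
    finally show ?thesis .
  qed
  moreover have "integrable M (\<lambda>\<omega>. H (\<omega>, Y \<omega>))"
    using H pair_measurable H_bounded
    by (intro integrable_const_bound[where B=B]) (auto intro: measurable_compose[rotated])
  moreover have "integrable M W"
    using measurable_from_subalg[OF F W_measurable] W_bounded
    by (intro integrable_const_bound[where B=B]) auto
  ultimately show ?thesis
    unfolding W_def[symmetric] by (rule F.real_cond_exp_charact[OF _ _ _ W_measurable])
qed

theorem lemma2:
  fixes M :: "'a measure" and X :: "nat \<Rightarrow> 'a \<Rightarrow> real" and n t :: nat and eps :: real
  assumes "prob_space M"
    and "\<And>i. i \<in> {1..n} \<Longrightarrow> X i \<in> borel_measurable M"
    and "prob_space.indep_vars M (\<lambda>_. borel) X {1..n}"
    and "\<And>i. i \<in> {1..n} \<Longrightarrow> distr M lborel (X i) = uniform_measure lborel {-1..1}"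
    and "eps > 0"
    and "t < n"
  shows "AE \<omega> in M.
           real_cond_exp M (gen_sigma M X t) (\<lambda>\<omega>. approx_frac eps (\<lambda>i. X i \<omega>) (Suc t)) \<omega>
         \<ge> approx_frac eps (\<lambda>i. X i \<omega>) t * (1 + (1/4) * (1 - approx_frac eps (\<lambda>i. X i \<omega>) t))"
proof -
  \<comment> \<open>the bound holds for every \<open>eps\<close>\<close>
  interpret prob_space M by fact
  define H where "H p = approx_frac eps ((\<lambda>i. X i (fst p))(Suc t := snd p)) (Suc t)" for p
  have "H \<in> borel_measurable (gen_sigma M X t \<Otimes>\<^sub>M borel)"
    unfolding H_def[abs_def] by (intro measurable_approx_frac_update measurable_gen_sigma)
  moreover have "\<bar>H p\<bar> \<le> 1" for p
    using approx_frac_bounds unfolding H_def by (simp add: abs_le_iff)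
  moreover have "distr M borel (X (Suc t)) = uniform_measure lborel {-1..1}"
    using assms(4)[of "Suc t"] \<open>t < n\<close> by (simp add: distr_cong[OF refl sets_lborel[symmetric]])
  ultimately have "AE \<omega> in M. real_cond_exp M (gen_sigma M X t) (\<lambda>\<omega>. H (\<omega>, X (Suc t) \<omega>)) \<omega>
      = (\<integral>y. H (\<omega>, y) \<partial>uniform_measure lborel {-1..1})"
    using real_cond_exp_freezing[OF subalgebra_gen_sigma _ indep_set_gen_sigma_Suc[OF assms(3,6)]]
      assms(2,6) by auto
  moreover have "H (\<omega>, X (Suc t) \<omega>) = approx_frac eps (\<lambda>i. X i \<omega>) (Suc t)" for \<omega>
    unfolding H_def by (simp add: fun_upd_idem)
  ultimately show ?thesis
    using integral_uniform_approx_frac_Suc_ge by (auto simp: H_def)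
qed

end
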